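(* Let $n\geq 2$ and $k\geq 3$. If $c$ is an exact $k$-coloring of $\mathcal{B}_n$ with no rainbow induced copy of $\mathcal{C}_3$, then $k\leq \binom{n}{\lceil n/2\rceil}+1$.
   Context: $\mathcal{B}_n$ denotes the Boolean lattice of all subsets of $[n]$ ordered by inclusion. An exact $k$-coloring of $\mathcal{B}_n$ is a surjective map $\mathcal{B}_n\to[k]$. A rainbow induced copy of $\mathcal{C}_3$ is a chain $X\subsetneq Y\subsetneq Z$ whose three sets have pairwise distinct colors. *)

theory Defs
  imports Main
begin

definition boolean_lattice :: "nat \<Rightarrow> nat set set" where
  "boolean_lattice n = Pow {1..n}"

definition exact_coloring :: "nat \<Rightarrow> nat \<Rightarrow> (nat set \<Rightarrow> nat) \<Rightarrow> bool" where
  "exact_coloring n k c \<longleftrightarrow> c ` boolean_lattice n = {1..k}"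

definition has_rainbow_C3 :: "nat \<Rightarrow> (nat set \<Rightarrow> nat) \<Rightarrow> bool" where
  "has_rainbow_C3 n c \<longleftrightarrow>
     (\<exists>X Y Z. X \<in> boolean_lattice n \<and> Y \<in> boolean_lattice n \<and> Z \<in> boolean_lattice n \<and>
              X \<subset> Y \<and> Y \<subset> Z \<and> c X \<noteq> c Y \<and> c Y \<noteq> c Z \<and> c X \<noteq> c Z)"

end

theory Submission
  imports Defs "HOL.Binomial_Plus"
begin

text \<open>For every color other than that of the empty set pick a set of that color. These sets form
  an antichain: if one were strictly contained in another, the two together with the empty set
  would be a rainbow 3-chain. Sperner's theorem, proved via the LYM inequality, bounds the size
  of an antichain by the central binomial coefficient.\<close>

definition antichain :: "'a set set \<Rightarrow> bool" where
  "antichain F \<longleftrightarrow> (\<forall>A\<in>F. \<forall>B\<in>F. A \<subseteq> B \<longrightarrow> A = B)"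

lemma antichain_subset: "antichain F \<Longrightarrow> G \<subseteq> F \<Longrightarrow> antichain G"
  unfolding antichain_def by blast

lemma lym_inequality:
  assumes "finite S" "F \<subseteq> Pow S" "antichain F"
  shows "(\<Sum>A\<in>F. fact (card A) * fact (card S - card A)) \<le> (fact (card S) :: nat)"
  using assms
proof (induction "card S" arbitrary: S F)
  case 0
  then have "F \<subseteq> {{}}" by auto
  then show ?case by (auto simp: subset_singleton_iff)
next
  case (Suc n)
  show ?case
  proof (cases "S \<in> F")
    case True
    then have "F = {S}" using Suc.prems(2,3) unfolding antichain_def by blast
    then show ?thesis by simp
  next
    case False
    define w :: "'a set \<Rightarrow> nat" where "w A = fact (card A) * fact (n - card A)" for A
    have finite_F: "finite F" using Suc.prems(1,2) finite_subset by auto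
    have IH: "(\<Sum>A\<in>{A\<in>F. x \<notin> A}. w A) \<le> fact n" if "x \<in> S" for x
    proof -
      have "card (S - {x}) = n" using Suc.hyps(2) Suc.prems(1) that by simp
      moreover have "{A\<in>F. x \<notin> A} \<subseteq> Pow (S - {x})" using Suc.prems(2) by auto
      ultimately show ?thesis unfolding w_def
        using Suc.hyps(1)[of "S - {x}" "{A\<in>F. x \<notin> A}"] Suc.prems(1,3)
        by (auto intro: antichain_subset)
    qed
    text \<open>Summing \<open>IH\<close> over \<open>x \<in> S\<close> counts each \<open>A \<in> F\<close> once for every point of
      \<open>S - A\<close>, and \<open>card (S - A) * w A\<close> is exactly the weight of \<open>A\<close> relative to \<open>S\<close>.\<close>
    have "(\<Sum>A\<in>F. fact (card A) * fact (card S - card A))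
        = (\<Sum>A\<in>F. \<Sum>x\<in>{x\<in>S. x \<notin> A}. w A)"
    proof (rule sum.cong)
      fix A assume "A \<in> F"
      then have A: "A \<subset> S" using Suc.prems(2) False by auto
      then have "card {x\<in>S. x \<notin> A} = card S - card A" "card S - card A = Suc (n - card A)"
        using Suc.hyps(2) Suc.prems(1) psubset_card_mono[of S A]
        by (auto simp: set_diff_eq[symmetric] card_Diff_subset finite_subset)
      then show "fact (card A) * fact (card S - card A) = (\<Sum>x\<in>{x\<in>S. x \<notin> A}. w A)"
        by (simp add: w_def algebra_simps)
    qed simp
    also have "\<dots> = (\<Sum>x\<in>S. \<Sum>A\<in>{A\<in>F. x \<notin> A}. w A)"
      by (rule sum.swap_restrict) (use finite_F Suc.prems(1) in auto)
    also have "\<dots> \<le> (\<Sum>x\<in>S. fact n)"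
      by (rule sum_mono) (rule IH)
    also have "\<dots> = fact (card S)"
      by (simp flip: Suc.hyps(2))
    finally show ?thesis .
  qed
qed

theorem sperner:
  assumes "finite S" "F \<subseteq> Pow S" "antichain F"
  shows "card F \<le> card S choose (card S div 2)"
proof -
  define n where "n = card S"
  define M where "M = n choose (n div 2)"
  have "card F * fact n = (\<Sum>A\<in>F. fact n)" by simp
  also have "\<dots> \<le> (\<Sum>A\<in>F. fact (card A) * fact (n - card A) * M)"
  proof (rule sum_mono)
    fix A assume "A \<in> F"
    then have "card A \<le> n" using assms(1,2) card_mono unfolding n_def by blast
    then have "fact n = fact (card A) * fact (n - card A) * (n choose card A)"
      by (rule binomial_fact_lemma[symmetric])
    also have "\<dots> \<le> fact (card A) * fact (n - card A) * M"
      unfolding M_def by (rule mult_left_mono[OF binomial_maximum]) simp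
    finally show "fact n \<le> fact (card A) * fact (n - card A) * M" .
  qed
  also have "\<dots> = (\<Sum>A\<in>F. fact (card A) * fact (n - card A)) * M"
    by (rule sum_distrib_right[symmetric])
  also have "\<dots> \<le> fact n * M"
    using lym_inequality[OF assms] unfolding n_def by (rule mult_right_mono) simp
  finally show ?thesis unfolding M_def n_def by simp
qed

lemma card_colors_le_Suc_central_binomial:
  assumes "finite S"
    and no_rainbow: "\<And>Y Z. {} \<subset> Y \<Longrightarrow> Y \<subset> Z \<Longrightarrow> Z \<subseteq> S \<Longrightarrow>
      c {} = c Y \<or> c Y = c Z \<or> c {} = c Z"
  shows "card (c ` Pow S) \<le> (card S choose (card S div 2)) + 1"
proof -
  define I where "I = c ` Pow S - {c {}}"
  define R where "R = inv_into (Pow S) c"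
  have I_colors: "I \<subseteq> c ` Pow S" unfolding I_def by blast
  have R: "R i \<subseteq> S" "c (R i) = i" if "i \<in> I" for i
    using inv_into_into[of i c "Pow S"] f_inv_into_f[of i c "Pow S"] that I_colors
    unfolding R_def by auto
  have "antichain (R ` I)"
    unfolding antichain_def
  proof (intro ballI impI)
    fix A B assume "A \<in> R ` I" "B \<in> R ` I" "A \<subseteq> B"
    then obtain i j where i: "i \<in> I" "A = R i" and j: "j \<in> I" "B = R j" by blast
    show "A = B"
    proof (rule ccontr)
      assume "A \<noteq> B"
      have colors: "c A = i" "c B = j" "i \<noteq> c {}" "j \<noteq> c {}"
        using R(2) i j unfolding I_def by auto
      then have "{} \<subset> A" "A \<subset> B" "B \<subseteq> S"
        using \<open>A \<subseteq> B\<close> \<open>A \<noteq> B\<close> R(1) j by auto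
      then have "i = j"
        using no_rainbow colors by metis
      then show False
        using i j \<open>A \<noteq> B\<close> by simp
    qed
  qed
  moreover have "R ` I \<subseteq> Pow S"
    using R(1) by blast
  ultimately have "card (R ` I) \<le> card S choose (card S div 2)"
    using sperner[OF assms(1)] by blast
  moreover have "card (R ` I) = card I"
    unfolding R_def using card_image inj_on_inv_into[OF I_colors] by blast
  moreover have "card (c ` Pow S) \<le> card I + 1"
    using card_Diff_singleton_if[of "c ` Pow S" "c {}"] assms(1)
    unfolding I_def by (auto split: if_splits)
  ultimately show ?thesis by linarith
qed

lemma binomial_Suc_div2_eq: "n choose ((n + 1) div 2) = n choose (n div 2)"
proof -
  have "(n + 1) div 2 \<le> n" "n - (n + 1) div 2 = n div 2" by auto
  then show ?thesis using binomial_symmetric by metis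
qed

theorem corollary2p2:
  fixes n k :: nat and c :: "nat set \<Rightarrow> nat"
  assumes "n \<ge> 2" and "k \<ge> 3"
    and "exact_coloring n k c"
    and "\<not> has_rainbow_C3 n c"
  shows "k \<le> (n choose ((n + 1) div 2)) + 1"
proof -
  have no_rainbow: "c {} = c Y \<or> c Y = c Z \<or> c {} = c Z"
    if "{} \<subset> Y" "Y \<subset> Z" "Z \<subseteq> {1..n}" for Y Z
  proof -
    have "{} \<in> boolean_lattice n" "Y \<in> boolean_lattice n" "Z \<in> boolean_lattice n"
      using that by (auto simp: boolean_lattice_def)
    with that assms(4) show ?thesis
      unfolding has_rainbow_C3_def by blast
  qed
  have "k = card (c ` Pow {1..n})"
    using assms(3) by (simp add: exact_coloring_def boolean_lattice_def)
  also have "\<dots> \<le> (n choose (n div 2)) + 1"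
    using card_colors_le_Suc_central_binomial[of "{1..n}" c] no_rainbow by simp
  also have "\<dots> = (n choose ((n + 1) div 2)) + 1"
    by (simp only: binomial_Suc_div2_eq)
  finally show ?thesis .
qed

end
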